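(* Let $(R,\cdot,\alpha)$ be a non-unital hom-associative ring, let $\sigma$ be a ring endomorphism of $R$ and $\delta$ a $\sigma$-derivation of $R$, and assume $\alpha\circ\delta=\delta\circ\alpha$ and $\alpha\circ\sigma=\sigma\circ\alpha$. Extend $\alpha$ homogeneously to $R[X;\sigma,\delta]$. Then $R[X;\sigma,\delta]$ is hom-associative with this twisting map.
   Context: A hom-associative ring is a triple $(R,\cdot,\alpha)$ where $R$ is an abelian group with a biadditive (not necessarily associative or unital) multiplication $\cdot$ and an additive map $\alpha\colon R\to R$ satisfying $\alpha(a)\cdot(b\cdot c)=(a\cdot b)\cdot\alpha(c)$ for all $a,b,c$. A $\sigma$-derivation is an additive map $\delta\colon R\to R$ with $\delta(a\cdot b)=\sigma(a)\cdot\delta(b)+\delta(a)\cdot b$ for all $a,b\in R$. $\mathbb{N}$ denotes the non-negative integers. For $m\in\mathbb{N}$ and $0\le i\le m$, $\pi_i^m\colon R\to R$ denotes the sum of all $\binom{m}{i}$ compositions of $i$ copies of $\sigma$ and $m-i$ copies of $\delta$ in arbitrary order ($\pi_0^0=\mathrm{id}_R$), and $\pi_i^m:=0$ if $i<0$ or $i>m$. The non-unital, non-associative Ore extension $R[X;\sigma,\delta]$ is the set of formal sums $\sum_{i\in\mathbb{N}}a_iX^i$ with $a_i\in R$, finitely many nonzero, with coefficientwise addition and the distributive multiplication determined by $aX^m\cdot bX^n=\sum_{i\in\mathbb{N}}(a\cdot\pi_i^m(b))X^{i+n}$. The homogeneous extension of $\alpha$ is $\alpha\left(\sum_ia_iX^i\right):=\sum_i\alpha(a_i)X^i$.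 Hom-associativity of $R[X;\sigma,\delta]$ means $\alpha(u)(vw)=(uv)\alpha(w)$ for all $u,v,w\in R[X;\sigma,\delta]$. *)

theory Defs
  imports Main
begin

text \<open>R is modelled as a type of class ab_group_add (abelian group) with an explicit
  multiplication mul, not necessarily associative or unital.\<close>

definition additive :: "('a::ab_group_add \<Rightarrow> 'a) \<Rightarrow> bool" where
  "additive f \<longleftrightarrow> (\<forall>x y. f (x + y) = f x + f y)"

definition biadditive :: "('a::ab_group_add \<Rightarrow> 'a \<Rightarrow> 'a) \<Rightarrow> bool" where
  "biadditive mul \<longleftrightarrow> (\<forall>x y z. mul (x + y) z = mul x z + mul y z)
                        \<and> (\<forall>x y z. mul x (y + z) = mul x y + mul x z)"

definition hom_assoc_ring :: "('a::ab_group_add \<Rightarrow> 'a \<Rightarrow> 'a) \<Rightarrow> ('a \<Rightarrow> 'a) \<Rightarrow> bool" where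
  "hom_assoc_ring mul \<alpha> \<longleftrightarrow> biadditive mul \<and> additive \<alpha>
     \<and> (\<forall>a b c. mul (\<alpha> a) (mul b c) = mul (mul a b) (\<alpha> c))"

definition ring_endo :: "('a::ab_group_add \<Rightarrow> 'a \<Rightarrow> 'a) \<Rightarrow> ('a \<Rightarrow> 'a) \<Rightarrow> bool" where
  "ring_endo mul \<sigma> \<longleftrightarrow> additive \<sigma> \<and> (\<forall>a b. \<sigma> (mul a b) = mul (\<sigma> a) (\<sigma> b))"

definition sigma_derivation ::
  "('a::ab_group_add \<Rightarrow> 'a \<Rightarrow> 'a) \<Rightarrow> ('a \<Rightarrow> 'a) \<Rightarrow> ('a \<Rightarrow> 'a) \<Rightarrow> bool" where
  "sigma_derivation mul \<sigma> \<delta> \<longleftrightarrow> additive \<delta>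
     \<and> (\<forall>a b. \<delta> (mul a b) = mul (\<sigma> a) (\<delta> b) + mul (\<delta> a) b)"

definition word_comp :: "('a \<Rightarrow> 'a) \<Rightarrow> ('a \<Rightarrow> 'a) \<Rightarrow> bool list \<Rightarrow> 'a \<Rightarrow> 'a" where
  "word_comp \<sigma> \<delta> w = foldr (\<lambda>b f. (if b then \<sigma> else \<delta>) \<circ> f) w id"

text \<open>pi i m: the sum of all compositions of i copies of \<sigma> and m - i copies of \<delta>,
  in arbitrary order (zero if i > m, as the set of words is then empty).\<close>
definition pi_map :: "('a::ab_group_add \<Rightarrow> 'a) \<Rightarrow> ('a \<Rightarrow> 'a) \<Rightarrow> nat \<Rightarrow> nat \<Rightarrow> 'a \<Rightarrow> 'a" where
  "pi_map \<sigma> \<delta> i m x = (\<Sum>w\<in>{w. length w = m \<and> count_list w True = i}. word_comp \<sigma> \<delta> w x)"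

text \<open>Elements of R[X;\<sigma>,\<delta>]: coefficient functions nat \<Rightarrow> R with finite support.\<close>
definition fin_supp :: "(nat \<Rightarrow> 'a::zero) \<Rightarrow> bool" where
  "fin_supp u \<longleftrightarrow> finite {n. u n \<noteq> 0}"

text \<open>Product: (a X^m)(b X^n) = sum_i (a \<cdot> pi_i^m(b)) X^(i+n), extended distributively.\<close>
definition ore_mult ::
  "('a::ab_group_add \<Rightarrow> 'a \<Rightarrow> 'a) \<Rightarrow> ('a \<Rightarrow> 'a) \<Rightarrow> ('a \<Rightarrow> 'a)
    \<Rightarrow> (nat \<Rightarrow> 'a) \<Rightarrow> (nat \<Rightarrow> 'a) \<Rightarrow> (nat \<Rightarrow> 'a)" where
  "ore_mult mul \<sigma> \<delta> u v = (\<lambda>k. \<Sum>m\<in>{m. u m \<noteq> 0}. \<Sum>n\<in>{n. v n \<noteq> 0}. \<Sum>i\<in>{..m}.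
      if i + n = k then mul (u m) (pi_map \<sigma> \<delta> i m (v n)) else 0)"

definition hom_ext :: "('a \<Rightarrow> 'a) \<Rightarrow> (nat \<Rightarrow> 'a) \<Rightarrow> (nat \<Rightarrow> 'a)" where
  "hom_ext \<alpha> u = (\<lambda>i. \<alpha> (u i))"

end

theory Submission
  imports Defs
begin

text \<open>
  Both sides of the identity are biadditive in the coefficients, so once the coefficients of
  products are written as sums over a common box of exponents it suffices to compare the
  contributions of three monomials a X^l, b X^m, c X^n. On the left, the generalised Leibniz
  rule pi_i^l (b c) = sum_p pi_p^l(b) pi_i^p(c) together with hom-associativity moves alpha(a)
  across the inner product; on the right, the composition rule
  pi_k^(p+m) = sum_(i+j=k) pi_i^p o pi_j^m regroups the exponents. Finally alpha commutes with
  every pi_i^m because it commutes with sigma and delta.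
\<close>

lemma additive_zero: "additive f \<Longrightarrow> f 0 = 0"
  unfolding additive_def by (metis add_cancel_right_right)

lemma additive_sum: "additive f \<Longrightarrow> f (sum g A) = (\<Sum>a\<in>A. f (g a))"
  using sum_comp_morphism[of f g A] by (simp add: additive_def additive_zero)

lemma additive_if_zero: "additive f \<Longrightarrow> f (if c then x else 0) = (if c then f x else 0)"
  by (simp add: additive_zero)

lemma if_add_zero:
  "(if c then a + b else 0) = (if c then a else 0) + (if c then b else (0::'a::monoid_add))"
  by simp

lemma if_if_zero: "(if c then if d then x else 0 else 0) = (if c \<and> d then x else 0)"
  by simp

lemma if_sum_zero: "(if c then sum f A else 0) = (\<Sum>x\<in>A. if c then f x else 0)"
  by simp

lemma sum_if_eq_collapse:
  "finite Q \<Longrightarrow> t \<in> Q \<Longrightarrow> (\<Sum>q\<in>Q. if P q \<and> t = q then g q else 0) = (if P t then g t else 0)"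
  by (simp add: sum.delta conj_commute[of "P _"] if_if_zero[symmetric] cong: if_cong)

lemma sum_swap3:
  "(\<Sum>a\<in>A. \<Sum>b\<in>B. \<Sum>c\<in>C. f a b c) = (\<Sum>b\<in>B. \<Sum>c\<in>C. \<Sum>a\<in>A. f a b c)"
  by (simp only: sum.swap[of _ A])

lemma sum_swap_collapse:
  assumes "finite R" and "t \<in> R"
  shows "(\<Sum>r\<in>R. \<Sum>k\<in>S. if P k then if t = r then g r k else 0 else 0)
    = (\<Sum>k\<in>S. if P k then g t k else 0)"
  using assms by (subst sum.swap) (simp add: if_if_zero sum_if_eq_collapse)

lemma sum_diagonal:
  fixes A B :: nat
  shows
  "(\<Sum>i<A. \<Sum>j<B. if i + j + n = K then f i j else 0)
    = (\<Sum>k<A + B. if k + n = K then \<Sum>i<A. \<Sum>j<B. if i + j = k then f i j else 0 else 0)"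
proof -
  have "(\<Sum>k<A + B. if k + n = K then \<Sum>i<A. \<Sum>j<B. if i + j = k then f i j else 0 else 0)
      = (\<Sum>i<A. \<Sum>j<B. \<Sum>k<A + B. if k + n = K \<and> i + j = k then f i j else 0)"
    unfolding if_sum_zero if_if_zero by (rule sum_swap3)
  also have "\<dots> = (\<Sum>i<A. \<Sum>j<B. if i + j + n = K then f i j else 0)"
    by (intro sum.cong refl) (simp add: sum_if_eq_collapse)
  finally show ?thesis ..
qed

locale sigma_delta_maps =
  fixes \<sigma> \<delta> :: "'a::ab_group_add \<Rightarrow> 'a"
  assumes additive_\<sigma>: "additive \<sigma>" and additive_\<delta>: "additive \<delta>"
begin

abbreviation \<pi> :: "nat \<Rightarrow> nat \<Rightarrow> 'a \<Rightarrow> 'a" where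
  "\<pi> \<equiv> pi_map \<sigma> \<delta>"

lemma finite_words: "finite {w::bool list. length w = m \<and> P w}"
  by (rule finite_subset[OF _ finite_lists_length_eq[of UNIV m]]) auto

lemma words_Suc:
  "{w. length w = Suc m \<and> count_list w True = i} =
     Cons True ` {w. length w = m \<and> Suc (count_list w True) = i} \<union>
     Cons False ` {w. length w = m \<and> count_list w True = i}"
  by (auto simp: length_Suc_conv image_iff)

lemma pi_map_0: "\<pi> i 0 x = (if i = 0 then x else 0)"
proof -
  have "{w::bool list. length w = 0 \<and> count_list w True = i} = (if i = 0 then {[]} else {})"
    by auto
  then show ?thesis by (simp add: pi_map_def word_comp_def)
qed

lemma pi_map_Suc:
  "\<pi> i (Suc m) x = (if i = 0 then 0 else \<sigma> (\<pi> (i - 1) m x)) + \<delta> (\<pi> i m x)"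
proof -
  let ?T = "{w. length w = m \<and> Suc (count_list w True) = i}"
  let ?F = "{w. length w = m \<and> count_list w True = i}"
  have "\<pi> i (Suc m) x = (\<Sum>w\<in>?T. \<sigma> (word_comp \<sigma> \<delta> w x)) + (\<Sum>w\<in>?F. \<delta> (word_comp \<sigma> \<delta> w x))"
    unfolding pi_map_def words_Suc
    by (subst sum.union_disjoint) (auto simp: finite_words sum.reindex word_comp_def)
  also have "(\<Sum>w\<in>?T. \<sigma> (word_comp \<sigma> \<delta> w x)) = (if i = 0 then 0 else \<sigma> (\<pi> (i - 1) m x))"
    by (auto simp: pi_map_def additive_sum[OF additive_\<sigma>] intro!: sum.cong)
  finally show ?thesis
    by (simp add: pi_map_def additive_sum[OF additive_\<delta>])
qed

lemma additive_pi_map: "additive (\<pi> i m)"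
proof (induction m arbitrary: i)
  case 0 then show ?case by (simp add: additive_def pi_map_0)
next
  case (Suc m)
  then show ?case
    using additive_\<sigma> additive_\<delta> by (simp add: additive_def pi_map_Suc)
qed

lemmas pi_map_zero = additive_zero[OF additive_pi_map]
  and pi_map_sum = additive_sum[OF additive_pi_map]

lemma pi_map_eq_0: "m < i \<Longrightarrow> \<pi> i m x = 0"
  by (induction m arbitrary: i)
    (auto simp: pi_map_0 pi_map_Suc additive_zero[OF additive_\<sigma>] additive_zero[OF additive_\<delta>])

lemma pi_map_commute:
  assumes "additive \<alpha>" and "\<alpha> \<circ> \<sigma> = \<sigma> \<circ> \<alpha>" and "\<alpha> \<circ> \<delta> = \<delta> \<circ> \<alpha>"
  shows "\<alpha> (\<pi> i m x) = \<pi> i m (\<alpha> x)"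
proof (induction m arbitrary: i)
  case 0 then show ?case by (simp add: pi_map_0 additive_zero[OF assms(1)])
next
  case (Suc m)
  then show ?case
    using assms by (simp add: pi_map_Suc additive_def additive_zero[OF assms(1)] fun_eq_iff)
qed

lemma pi_map_exp_add:
  "\<pi> k (p + m) x = (\<Sum>i\<le>p. \<Sum>j\<le>m. if i + j = k then \<pi> i p (\<pi> j m x) else 0)"
proof (induction p arbitrary: k)
  case 0
  then show ?case by (cases "k \<le> m") (auto simp: pi_map_0 pi_map_eq_0)
next
  case (Suc p)
  have "(if k = 0 then 0 else \<sigma> (\<pi> (k - 1) (p + m) x))
      = (\<Sum>i\<le>p. \<Sum>j\<le>m. if Suc i + j = k then \<sigma> (\<pi> i p (\<pi> j m x)) else 0)"
    by (auto simp: Suc.IH additive_sum[OF additive_\<sigma>] additive_if_zero[OF additive_\<sigma>]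
        intro!: sum.cong)
  moreover have "\<delta> (\<pi> k (p + m) x)
      = (\<Sum>i\<le>Suc p. \<Sum>j\<le>m. if i + j = k then \<delta> (\<pi> i p (\<pi> j m x)) else 0)"
    by (simp add: Suc.IH additive_sum[OF additive_\<delta>] additive_if_zero[OF additive_\<delta>]
        additive_zero[OF additive_\<delta>] pi_map_eq_0 cong: if_cong)
  ultimately show ?case
    by (simp add: pi_map_Suc sum.atMost_Suc_shift sum.distrib if_add_zero
        del: sum.atMost_Suc cong: if_cong)
qed

end

locale ore_extension = sigma_delta_maps \<sigma> \<delta> for \<sigma> \<delta> :: "'a::ab_group_add \<Rightarrow> 'a" +
  fixes mul :: "'a \<Rightarrow> 'a \<Rightarrow> 'a" (infixl "\<cdot>" 70)
  assumes biadditive_mul: "biadditive (\<cdot>)"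
begin

abbreviation ore_times :: "(nat \<Rightarrow> 'a) \<Rightarrow> (nat \<Rightarrow> 'a) \<Rightarrow> nat \<Rightarrow> 'a" (infixl "\<star>" 70) where
  "u \<star> v \<equiv> ore_mult (\<cdot>) \<sigma> \<delta> u v"

lemma additive_mul_left: "additive (\<lambda>x. x \<cdot> y)"
  and additive_mul_right: "additive (\<lambda>y. x \<cdot> y)"
  using biadditive_mul by (simp_all add: biadditive_def additive_def)

lemmas mul_simps =
  additive_zero[OF additive_mul_left] additive_zero[OF additive_mul_right]
  additive_sum[OF additive_mul_left] additive_sum[OF additive_mul_right]
  additive_if_zero[OF additive_mul_left] additive_if_zero[OF additive_mul_right]

lemma pi_map_mul:
  assumes "ring_endo (\<cdot>) \<sigma>" and "sigma_derivation (\<cdot>) \<sigma> \<delta>"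
  shows "\<pi> i m (a \<cdot> b) = (\<Sum>j\<le>m. \<pi> j m a \<cdot> \<pi> i j b)"
proof (induction m arbitrary: i)
  case 0
  then show ?case by (simp add: pi_map_0 mul_simps)
next
  case (Suc m)
  have \<sigma>_mul: "\<sigma> (x \<cdot> y) = \<sigma> x \<cdot> \<sigma> y" and \<delta>_mul: "\<delta> (x \<cdot> y) = \<sigma> x \<cdot> \<delta> y + \<delta> x \<cdot> y" for x y
    using assms by (simp_all add: ring_endo_def sigma_derivation_def)
  have "\<pi> i (Suc m) (a \<cdot> b) = (if i = 0 then 0 else \<sigma> (\<pi> (i - 1) m (a \<cdot> b))) + \<delta> (\<pi> i m (a \<cdot> b))"
    by (rule pi_map_Suc)
  also have "\<dots> = (\<Sum>j\<le>m. \<sigma> (\<pi> j m a) \<cdot> (if i = 0 then 0 else \<sigma> (\<pi> (i - 1) j b)))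
      + (\<Sum>j\<le>m. \<sigma> (\<pi> j m a) \<cdot> \<delta> (\<pi> i j b) + \<delta> (\<pi> j m a) \<cdot> \<pi> i j b)"
    by (simp add: Suc.IH additive_sum[OF additive_\<sigma>] additive_sum[OF additive_\<delta>] \<sigma>_mul \<delta>_mul
        mul_simps)
  also have "\<dots> = (\<Sum>j\<le>m. \<sigma> (\<pi> j m a) \<cdot> \<pi> i (Suc j) b) + (\<Sum>j\<le>m. \<delta> (\<pi> j m a) \<cdot> \<pi> i j b)"
    using biadditive_mul by (simp add: pi_map_Suc sum.distrib biadditive_def algebra_simps)
  also have "\<dots> = (\<Sum>j\<le>Suc m. \<pi> j (Suc m) a \<cdot> \<pi> i j b)"
  proof -
    have "(\<Sum>j\<le>Suc m. \<pi> j (Suc m) a \<cdot> \<pi> i j b)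
        = (\<Sum>j\<le>Suc m. (if j = 0 then 0 else \<sigma> (\<pi> (j - 1) m a)) \<cdot> \<pi> i j b)
          + (\<Sum>j\<le>Suc m. \<delta> (\<pi> j m a) \<cdot> \<pi> i j b)"
      using biadditive_mul by (simp add: pi_map_Suc[of _ m a] biadditive_def sum.distrib)
    also have "(\<Sum>j\<le>Suc m. (if j = 0 then 0 else \<sigma> (\<pi> (j - 1) m a)) \<cdot> \<pi> i j b)
        = (\<Sum>j\<le>m. \<sigma> (\<pi> j m a) \<cdot> \<pi> i (Suc j) b)"
      by (simp only: sum.atMost_Suc_shift) (simp add: mul_simps)
    also have "(\<Sum>j\<le>Suc m. \<delta> (\<pi> j m a) \<cdot> \<pi> i j b) = (\<Sum>j\<le>m. \<delta> (\<pi> j m a) \<cdot> \<pi> i j b)"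
      by (simp add: pi_map_eq_0 additive_zero[OF additive_\<delta>] mul_simps)
    finally show ?thesis by simp
  qed
  finally show ?case .
qed

text \<open>Unlike \<open>ore_mult_def\<close>, which sums over the supports, this sums over fixed boxes of
  exponents, so that nested sums can be interchanged freely.\<close>

lemma ore_mult_coeff:
  assumes u: "{m. u m \<noteq> 0} \<subseteq> {..<A}" and v: "{n. v n \<noteq> 0} \<subseteq> {..<B}"
  shows "(u \<star> v) k = (\<Sum>m<A. \<Sum>n<B. \<Sum>i<A. if i + n = k then u m \<cdot> \<pi> i m (v n) else 0)"
proof -
  let ?c = "\<lambda>m n. \<Sum>i<A. if i + n = k then u m \<cdot> \<pi> i m (v n) else 0"
  have vanish: "?c m n = 0" if "u m = 0 \<or> v n = 0" for m n
    using that by (auto simp: pi_map_zero mul_simps cong: if_cong)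
  have "(u \<star> v) k = (\<Sum>m\<in>{m. u m \<noteq> 0}. \<Sum>n\<in>{n. v n \<noteq> 0}. ?c m n)"
    unfolding ore_mult_def
  proof (rule sum.cong[OF refl], rule sum.cong[OF refl])
    fix m n assume "m \<in> {m. u m \<noteq> 0}"
    with u have "m < A" by auto
    then show "(\<Sum>i\<le>m. if i + n = k then u m \<cdot> \<pi> i m (v n) else 0) = ?c m n"
      by (intro sum.mono_neutral_left) (auto simp: pi_map_eq_0 mul_simps)
  qed
  also have "\<dots> = (\<Sum>m\<in>{m. u m \<noteq> 0}. \<Sum>n<B. ?c m n)"
    using v vanish by (intro sum.cong[OF refl] sum.mono_neutral_left) auto
  also have "\<dots> = (\<Sum>m<A. \<Sum>n<B. ?c m n)"
    using u vanish by (intro sum.mono_neutral_left) (auto intro!: sum.neutral)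
  finally show ?thesis .
qed

lemma support_ore_mult:
  assumes "{m. u m \<noteq> 0} \<subseteq> {..<A}" and "{n. v n \<noteq> 0} \<subseteq> {..<B}"
  shows "{k. (u \<star> v) k \<noteq> 0} \<subseteq> {..<A + B}"
  using ore_mult_coeff[OF assms] by (auto intro!: sum.neutral)

lemma right_nested_product_eq:
  assumes x: "{l. x l \<noteq> 0} \<subseteq> {..<N}" and y: "{m. y m \<noteq> 0} \<subseteq> {..<N}"
    and z: "{n. z n \<noteq> 0} \<subseteq> {..<N}"
  shows "(x \<star> (y \<star> z)) K = (\<Sum>l<N. \<Sum>m<N. \<Sum>n<N. \<Sum>i<N. \<Sum>j<N.
      if i + j + n = K then x l \<cdot> \<pi> i l (y m \<cdot> \<pi> j m (z n)) else 0)"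
proof -
  have "(x \<star> (y \<star> z)) K = (\<Sum>l<N. \<Sum>q<N + N. \<Sum>i<N.
      if i + q = K then x l \<cdot> \<pi> i l ((y \<star> z) q) else 0)"
    using x support_ore_mult[OF y z] by (rule ore_mult_coeff)
  also have "\<dots> = (\<Sum>l<N. \<Sum>q<N + N. \<Sum>i<N. \<Sum>m<N. \<Sum>n<N. \<Sum>j<N.
      if i + q = K \<and> j + n = q then x l \<cdot> \<pi> i l (y m \<cdot> \<pi> j m (z n)) else 0)"
    by (simp add: ore_mult_coeff[OF y z] pi_map_sum additive_if_zero[OF additive_pi_map] pi_map_zero
        mul_simps if_sum_zero if_if_zero cong: if_cong)
  also have "\<dots> = (\<Sum>l<N. \<Sum>i<N. \<Sum>m<N. \<Sum>n<N. \<Sum>j<N. \<Sum>q<N + N.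
      if i + q = K \<and> j + n = q then x l \<cdot> \<pi> i l (y m \<cdot> \<pi> j m (z n)) else 0)"
    by (simp only: sum.swap[where A = "{..<N + N}"])
  also have "\<dots> = (\<Sum>l<N. \<Sum>i<N. \<Sum>m<N. \<Sum>n<N. \<Sum>j<N.
      if i + j + n = K then x l \<cdot> \<pi> i l (y m \<cdot> \<pi> j m (z n)) else 0)"
    by (intro sum.cong refl) (simp add: sum_if_eq_collapse add.assoc)
  also have "\<dots> = (\<Sum>l<N. \<Sum>m<N. \<Sum>n<N. \<Sum>i<N. \<Sum>j<N.
      if i + j + n = K then x l \<cdot> \<pi> i l (y m \<cdot> \<pi> j m (z n)) else 0)"
    by (rule sum.cong[OF refl], rule sum_swap3)
  finally show ?thesis .
qed

lemma left_nested_product_eq: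
  assumes x: "{l. x l \<noteq> 0} \<subseteq> {..<N}" and y: "{m. y m \<noteq> 0} \<subseteq> {..<N}"
    and z: "{n. z n \<noteq> 0} \<subseteq> {..<N}"
  shows "((x \<star> y) \<star> z) K = (\<Sum>l<N. \<Sum>m<N. \<Sum>n<N. \<Sum>p<N. \<Sum>k<N + N.
      if k + n = K then (x l \<cdot> \<pi> p l (y m)) \<cdot> \<pi> k (p + m) (z n) else 0)"
proof -
  have "((x \<star> y) \<star> z) K = (\<Sum>r<N + N. \<Sum>n<N. \<Sum>k<N + N.
      if k + n = K then (x \<star> y) r \<cdot> \<pi> k r (z n) else 0)"
    using support_ore_mult[OF x y] z by (rule ore_mult_coeff)
  also have "\<dots> = (\<Sum>r<N + N. \<Sum>n<N. \<Sum>k<N + N. \<Sum>l<N. \<Sum>m<N. \<Sum>p<N.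
      if k + n = K then if p + m = r then (x l \<cdot> \<pi> p l (y m)) \<cdot> \<pi> k r (z n) else 0 else 0)"
    by (simp add: ore_mult_coeff[OF x y] mul_simps if_sum_zero cong: if_cong)
  also have "\<dots> = (\<Sum>n<N. \<Sum>l<N. \<Sum>m<N. \<Sum>p<N. \<Sum>r<N + N. \<Sum>k<N + N.
      if k + n = K then if p + m = r then (x l \<cdot> \<pi> p l (y m)) \<cdot> \<pi> k r (z n) else 0 else 0)"
    \<comment> \<open>restricting the inner range to \<open>{..<N}\<close> keeps \<open>r\<close> and \<open>k\<close> from being swapped forever\<close>
    by (simp only: sum.swap[of _ "{..<N + N}" "{..<N}"])
  also have "\<dots> = (\<Sum>n<N. \<Sum>l<N. \<Sum>m<N. \<Sum>p<N. \<Sum>k<N + N.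
      if k + n = K then (x l \<cdot> \<pi> p l (y m)) \<cdot> \<pi> k (p + m) (z n) else 0)"
    by (simp add: sum_swap_collapse)
  also have "\<dots> = (\<Sum>l<N. \<Sum>m<N. \<Sum>n<N. \<Sum>p<N. \<Sum>k<N + N.
      if k + n = K then (x l \<cdot> \<pi> p l (y m)) \<cdot> \<pi> k (p + m) (z n) else 0)"
    by (rule sum_swap3)
  finally show ?thesis .
qed

end

locale hom_assoc_ore_extension =
  fixes mul :: "'a::ab_group_add \<Rightarrow> 'a \<Rightarrow> 'a" (infixl "\<cdot>" 70)
    and \<alpha> \<sigma> \<delta> :: "'a \<Rightarrow> 'a"
  assumes hom_assoc_ring: "hom_assoc_ring (\<cdot>) \<alpha>"
    and ring_endo: "ring_endo (\<cdot>) \<sigma>"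
    and sigma_derivation: "sigma_derivation (\<cdot>) \<sigma> \<delta>"
    and \<alpha>_\<delta>_commute: "\<alpha> \<circ> \<delta> = \<delta> \<circ> \<alpha>"
    and \<alpha>_\<sigma>_commute: "\<alpha> \<circ> \<sigma> = \<sigma> \<circ> \<alpha>"

sublocale hom_assoc_ore_extension \<subseteq> ore_extension \<sigma> \<delta> mul
  using hom_assoc_ring ring_endo sigma_derivation
  by unfold_locales (simp_all add: hom_assoc_ring_def ring_endo_def sigma_derivation_def)

context hom_assoc_ore_extension
begin

lemma additive_\<alpha>: "additive \<alpha>"
  using hom_assoc_ring by (simp add: hom_assoc_ring_def)

lemma hom_assoc: "\<alpha> a \<cdot> (b \<cdot> c) = (a \<cdot> b) \<cdot> \<alpha> c"
  using hom_assoc_ring by (simp add: hom_assoc_ring_def)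

lemma \<alpha>_pi_map: "\<alpha> (\<pi> i m x) = \<pi> i m (\<alpha> x)"
  using additive_\<alpha> \<alpha>_\<sigma>_commute \<alpha>_\<delta>_commute by (rule pi_map_commute)

text \<open>The coefficients of \<open>X\<^sup>K\<close> in \<open>\<alpha>(a X\<^sup>l) ((b X\<^sup>m) (c X\<^sup>n))\<close> and in
  \<open>((a X\<^sup>l) (b X\<^sup>m)) (\<alpha>(c) X\<^sup>n)\<close> agree.\<close>

lemma hom_assoc_monomials:
  assumes l: "l < N" and m: "m < N"
  shows "(\<Sum>i<N. \<Sum>j<N. if i + j + n = K then \<alpha> a \<cdot> \<pi> i l (b \<cdot> \<pi> j m c) else 0)
    = (\<Sum>p<N. \<Sum>k<N + N. if k + n = K then (a \<cdot> \<pi> p l b) \<cdot> \<pi> k (p + m) (\<alpha> c) else 0)"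
proof -
  have leibniz: "\<alpha> a \<cdot> \<pi> i l (b \<cdot> y) = (\<Sum>p<N. (a \<cdot> \<pi> p l b) \<cdot> \<alpha> (\<pi> i p y))" for i y
  proof -
    have "\<alpha> a \<cdot> \<pi> i l (b \<cdot> y) = (\<Sum>p\<le>l. (a \<cdot> \<pi> p l b) \<cdot> \<alpha> (\<pi> i p y))"
      by (simp add: pi_map_mul[OF ring_endo sigma_derivation] mul_simps hom_assoc)
    also have "\<dots> = (\<Sum>p<N. (a \<cdot> \<pi> p l b) \<cdot> \<alpha> (\<pi> i p y))"
      using l by (intro sum.mono_neutral_left) (auto simp: pi_map_eq_0 mul_simps)
    finally show ?thesis .
  qed
  have composition: "(\<Sum>i<N. \<Sum>j<N. if i + j = k then \<pi> i p (\<pi> j m c) else 0) = \<pi> k (p + m) c"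
    if "p < N" for p k
  proof -
    have "(\<Sum>i<N. \<Sum>j<N. if i + j = k then \<pi> i p (\<pi> j m c) else 0)
        = (\<Sum>i\<le>p. \<Sum>j<N. if i + j = k then \<pi> i p (\<pi> j m c) else 0)"
      using that by (intro sum.mono_neutral_right) (auto simp: pi_map_eq_0 cong: if_cong)
    also have "\<dots> = (\<Sum>i\<le>p. \<Sum>j\<le>m. if i + j = k then \<pi> i p (\<pi> j m c) else 0)"
      using m by (intro sum.cong[OF refl] sum.mono_neutral_right)
        (auto simp: pi_map_eq_0 pi_map_zero cong: if_cong)
    finally have "(\<Sum>i<N. \<Sum>j<N. if i + j = k then \<pi> i p (\<pi> j m c) else 0)
        = (\<Sum>i\<le>p. \<Sum>j\<le>m. if i + j = k then \<pi> i p (\<pi> j m c) else 0)" .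
    then show ?thesis by (simp add: pi_map_exp_add)
  qed
  have "(\<Sum>i<N. \<Sum>j<N. if i + j + n = K then \<alpha> a \<cdot> \<pi> i l (b \<cdot> \<pi> j m c) else 0)
      = (\<Sum>i<N. \<Sum>j<N. \<Sum>p<N. if i + j + n = K then (a \<cdot> \<pi> p l b) \<cdot> \<alpha> (\<pi> i p (\<pi> j m c)) else 0)"
    by (simp add: leibniz if_sum_zero cong: if_cong)
  also have "\<dots> = (\<Sum>p<N. \<Sum>i<N. \<Sum>j<N.
      if i + j + n = K then (a \<cdot> \<pi> p l b) \<cdot> \<alpha> (\<pi> i p (\<pi> j m c)) else 0)"
    by (rule sum_swap3[symmetric])
  also have "\<dots> = (\<Sum>p<N. (a \<cdot> \<pi> p l b) \<cdot>
      \<alpha> (\<Sum>i<N. \<Sum>j<N. if i + j + n = K then \<pi> i p (\<pi> j m c) else 0))"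
    by (simp add: additive_sum[OF additive_\<alpha>] additive_if_zero[OF additive_\<alpha>] mul_simps)
  also have "\<dots> = (\<Sum>p<N. (a \<cdot> \<pi> p l b) \<cdot>
      \<alpha> (\<Sum>k<N + N. if k + n = K then \<pi> k (p + m) c else 0))"
    by (simp add: sum_diagonal composition cong: if_cong)
  also have "\<dots> = (\<Sum>p<N. \<Sum>k<N + N. if k + n = K then (a \<cdot> \<pi> p l b) \<cdot> \<pi> k (p + m) (\<alpha> c) else 0)"
    by (simp add: additive_sum[OF additive_\<alpha>] additive_if_zero[OF additive_\<alpha>] \<alpha>_pi_map mul_simps
        cong: if_cong)
  finally show ?thesis .
qed

lemma support_hom_ext: "{n. hom_ext \<alpha> u n \<noteq> 0} \<subseteq> {n. u n \<noteq> 0}"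
  by (auto simp: hom_ext_def additive_zero[OF additive_\<alpha>])

lemma ore_mult_hom_assoc:
  assumes "fin_supp u" and "fin_supp v" and "fin_supp w"
  shows "hom_ext \<alpha> u \<star> (v \<star> w) = (u \<star> v) \<star> hom_ext \<alpha> w"
proof
  fix K
  have "finite ({n. u n \<noteq> 0} \<union> {n. v n \<noteq> 0} \<union> {n. w n \<noteq> 0})"
    using assms by (simp add: fin_supp_def)
  then obtain N where "\<forall>n \<in> {n. u n \<noteq> 0} \<union> {n. v n \<noteq> 0} \<union> {n. w n \<noteq> 0}. n < N"
    unfolding finite_nat_set_iff_bounded by blast
  then have u: "{n. u n \<noteq> 0} \<subseteq> {..<N}" and v: "{n. v n \<noteq> 0} \<subseteq> {..<N}"
    and w: "{n. w n \<noteq> 0} \<subseteq> {..<N}"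
    by auto
  have \<alpha>u: "{n. hom_ext \<alpha> u n \<noteq> 0} \<subseteq> {..<N}" and \<alpha>w: "{n. hom_ext \<alpha> w n \<noteq> 0} \<subseteq> {..<N}"
    using subset_trans[OF support_hom_ext] u w by blast+
  have "(hom_ext \<alpha> u \<star> (v \<star> w)) K = (\<Sum>l<N. \<Sum>m<N. \<Sum>n<N. \<Sum>i<N. \<Sum>j<N.
      if i + j + n = K then \<alpha> (u l) \<cdot> \<pi> i l (v m \<cdot> \<pi> j m (w n)) else 0)"
    unfolding right_nested_product_eq[OF \<alpha>u v w] by (simp add: hom_ext_def cong: if_cong)
  also have "\<dots> = (\<Sum>l<N. \<Sum>m<N. \<Sum>n<N. \<Sum>p<N. \<Sum>k<N + N.
      if k + n = K then (u l \<cdot> \<pi> p l (v m)) \<cdot> \<pi> k (p + m) (\<alpha> (w n)) else 0)"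
    by (simp add: hom_assoc_monomials)
  also have "\<dots> = ((u \<star> v) \<star> hom_ext \<alpha> w) K"
    unfolding left_nested_product_eq[OF u v \<alpha>w] by (simp add: hom_ext_def cong: if_cong)
  finally show "(hom_ext \<alpha> u \<star> (v \<star> w)) K = ((u \<star> v) \<star> hom_ext \<alpha> w) K" .
qed

end

theorem mainTheorem8:
  fixes mul :: "'a::ab_group_add \<Rightarrow> 'a \<Rightarrow> 'a"
    and \<alpha> \<sigma> \<delta> :: "'a \<Rightarrow> 'a"
  assumes "hom_assoc_ring mul \<alpha>"
    and "ring_endo mul \<sigma>"
    and "sigma_derivation mul \<sigma> \<delta>"
    and "\<alpha> \<circ> \<delta> = \<delta> \<circ> \<alpha>"
    and "\<alpha> \<circ> \<sigma> = \<sigma> \<circ> \<alpha>"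
  shows "\<forall>u v w. fin_supp u \<and> fin_supp v \<and> fin_supp w \<longrightarrow>
    ore_mult mul \<sigma> \<delta> (hom_ext \<alpha> u) (ore_mult mul \<sigma> \<delta> v w)
      = ore_mult mul \<sigma> \<delta> (ore_mult mul \<sigma> \<delta> u v) (hom_ext \<alpha> w)"
proof -
  interpret hom_assoc_ore_extension mul \<alpha> \<sigma> \<delta>
    using assms by unfold_locales
  show ?thesis
    using ore_mult_hom_assoc by blast
qed

end
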